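(* The graphs $C_3+(P_2\cup P_1)$ and $P_3+P_3$ are of class $\mathcal C_0$.
   Context: All graphs are finite, simple and undirected. $C_n$ and $P_n$ denote the cycle and the path on $n$ vertices; $G_1\cup G_2$ is the disjoint union. The join $G+H$ is obtained from vertex-disjoint copies of $G$ and $H$ by adding all edges between $V(G)$ and $V(H)$. A drawing is 1-planar if each edge is crossed at most once (adjacent edges never cross, no edge crosses itself); a graph is 1-planar if it has such a drawing. For a 1-planar drawing $D$, $D^\times$ is the plane graph obtained by turning each crossing into a new degree-4 vertex (a false vertex); $N_{D^\times}(c)$ is the neighbour set of a false vertex $c$. A 1-planar graph is of class $\mathcal C_0$ if it has a 1-planar drawing $D$ with $|N_{D^\times}(c_1)\cap N_{D^\times}(c_2)|=0$ for all distinct false vertices $c_1,c_2$. *)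

theory Defs
  imports "HOL-Analysis.Analysis"
begin

text \<open>A simple graph is given by a vertex set V and an edge set E of 2-element subsets of V.\<close>

definition crosses :: "('a set \<Rightarrow> real \<Rightarrow> complex) \<Rightarrow> 'a set \<Rightarrow> 'a set \<Rightarrow> bool" where
  "crosses curve e f \<longleftrightarrow> e \<inter> f = {} \<and> path_image (curve e) \<inter> path_image (curve f) \<noteq> {}"

definition one_planar_drawing ::
  "'a set \<Rightarrow> 'a set set \<Rightarrow> ('a \<Rightarrow> complex) \<Rightarrow> ('a set \<Rightarrow> real \<Rightarrow> complex) \<Rightarrow> bool" where
  "one_planar_drawing V E pos curve \<longleftrightarrow>
     inj_on pos V \<and>
     (\<forall>e\<in>E. arc (curve e) \<and> {pathstart (curve e), pathfinish (curve e)} = pos ` e \<and>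
             path_image (curve e) \<inter> pos ` V = pos ` e) \<and>
     \<comment> \<open>adjacent edges never cross: they meet only in their common end vertex\<close>
     (\<forall>e\<in>E. \<forall>f\<in>E. e \<noteq> f \<and> e \<inter> f \<noteq> {} \<longrightarrow>
        path_image (curve e) \<inter> path_image (curve f) = pos ` (e \<inter> f)) \<and>
     \<comment> \<open>two independent edges meet in at most one point (a crossing)\<close>
     (\<forall>e\<in>E. \<forall>f\<in>E. e \<inter> f = {} \<longrightarrow>
        finite (path_image (curve e) \<inter> path_image (curve f)) \<and>
        card (path_image (curve e) \<inter> path_image (curve f)) \<le> 1) \<and>
     \<comment> \<open>each edge is crossed at most once\<close>
     (\<forall>e\<in>E. card {f\<in>E. crosses curve e f} \<le> 1)"

text \<open>A crossing of edges e and f becomes a false vertex of degree 4 whose neighbours in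
  D^x are exactly the end vertices of e and f, i.e. the set e \<union> f.  Distinct false
  vertices correspond to distinct unordered pairs of crossing edges.\<close>

definition class_C0 :: "'a set \<Rightarrow> 'a set set \<Rightarrow> bool" where
  "class_C0 V E \<longleftrightarrow>
     (\<exists>pos curve. one_planar_drawing V E pos curve \<and>
        (\<forall>e1\<in>E. \<forall>f1\<in>E. \<forall>e2\<in>E. \<forall>f2\<in>E.
           crosses curve e1 f1 \<and> crosses curve e2 f2 \<and> {e1, f1} \<noteq> {e2, f2} \<longrightarrow>
           (e1 \<union> f1) \<inter> (e2 \<union> f2) = {}))"

definition join_edges :: "'a set \<Rightarrow> 'a set set \<Rightarrow> 'a set \<Rightarrow> 'a set set \<Rightarrow> 'a set set" where
  "join_edges V1 E1 V2 E2 = E1 \<union> E2 \<union> {{u, v} | u v. u \<in> V1 \<and> v \<in> V2}"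

text \<open>C_3 on {0,1,2}; P_2 \<union> P_1 on {3,4,5}; P_3 on {0,1,2} and on {3,4,5}.\<close>
definition C3_edges :: "nat set set" where "C3_edges = {{0,1},{1,2},{0,2}}"
definition P2_P1_edges :: "nat set set" where "P2_P1_edges = {{3,4}}"
definition P3_edges_a :: "nat set set" where "P3_edges_a = {{0,1},{1,2}}"
definition P3_edges_b :: "nat set set" where "P3_edges_b = {{3,4},{4,5}}"

end

theory Submission
  imports Defs
begin

text \<open>Both graphs admit straight-line drawings on six points in general position in which
  exactly one pair of independent edges crosses.  A drawing with a single crossing has a single
  false vertex, so the class C0 condition holds vacuously, and 1-planarity reduces to finitely
  many sign computations: two segments are disjoint as soon as the endpoints of one of them lie
  strictly on the same side of the line through the other, and two non-parallel segments meet
  at most once.\<close>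

definition det2 :: "complex \<Rightarrow> complex \<Rightarrow> real" where
  "det2 z w = Re z * Im w - Im z * Re w"

definition orient :: "complex \<Rightarrow> complex \<Rightarrow> complex \<Rightarrow> real" where
  "orient a b c = det2 (b - a) (c - a)"

lemma in_closed_segment_affine:
  assumes "z \<in> closed_segment a b"
  obtains u where "0 \<le> u" "u \<le> 1" "z = a + u *\<^sub>R (b - a)"
proof -
  from assms obtain u where "0 \<le> u" "u \<le> 1" "z = (1 - u) *\<^sub>R a + u *\<^sub>R b"
    by (auto simp: in_segment)
  then show thesis by (intro that[of u]) (simp_all add: algebra_simps)
qed

lemma orient_affine_combination:
  "orient a b (c + u *\<^sub>R (d - c)) = (1 - u) * orient a b c + u * orient a b d"
  by (simp add: orient_def det2_def algebra_simps)

lemma orient_eq_0_if_in_closed_segment: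
  assumes "z \<in> closed_segment a b"
  shows "orient a b z = 0"
proof -
  from assms obtain u where z: "z = a + u *\<^sub>R (b - a)"
    by (auto elim: in_closed_segment_affine)
  then have "orient a b z = (1 - u) * orient a b a + u * orient a b b"
    by (simp only: z orient_affine_combination)
  also have "\<dots> = 0" by (simp add: orient_def det2_def algebra_simps)
  finally show ?thesis .
qed

definition same_side :: "complex \<Rightarrow> complex \<Rightarrow> complex \<Rightarrow> complex \<Rightarrow> bool" where
  "same_side a b c d \<longleftrightarrow> orient a b c * orient a b d > 0"

lemma closed_segment_disjoint_if_same_side:
  assumes "same_side a b c d"
  shows "closed_segment a b \<inter> closed_segment c d = {}"
proof (rule ccontr)
  assume "closed_segment a b \<inter> closed_segment c d \<noteq> {}"
  then obtain z where z: "z \<in> closed_segment a b" "z \<in> closed_segment c d" by auto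
  from z(2) obtain u where u: "0 \<le> u" "u \<le> 1" "z = c + u *\<^sub>R (d - c)"
    by (rule in_closed_segment_affine)
  define x y where "x = orient a b c" and "y = orient a b d"
  have "x * y > 0" using assms by (simp add: same_side_def x_def y_def)
  then have "x * x > 0" by (metis mult_eq_0_iff not_real_square_gt_zero)
  \<comment> \<open>multiplying by x makes both summands nonnegative, and they cannot both vanish\<close>
  have "x * orient a b z = (1 - u) * (x * x) + u * (x * y)"
    unfolding u(3) orient_affine_combination by (simp add: x_def y_def algebra_simps)
  also have "\<dots> > 0"
    using u(1,2) \<open>x * x > 0\<close> \<open>x * y > 0\<close>
    by (cases "u = 1") (auto intro: add_pos_nonneg add_nonneg_pos)
  finally show False using orient_eq_0_if_in_closed_segment[OF z(1)] by simp
qed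

lemma closed_segment_inter_closed_segment_common_end:
  assumes "orient a b c \<noteq> 0"
  shows "closed_segment a b \<inter> closed_segment a c = {a}"
proof (intro equalityI subsetI)
  fix z assume z: "z \<in> closed_segment a b \<inter> closed_segment a c"
  then obtain t where t: "z = a + t *\<^sub>R (c - a)"
    by (auto elim: in_closed_segment_affine)
  have "orient a b z = t * orient a b c"
    using orient_affine_combination[of a b a t c] t by (simp add: orient_def det2_def)
  then have "t = 0" using orient_eq_0_if_in_closed_segment[of z a b] z assms by auto
  then show "z \<in> {a}" using t by simp
qed auto

lemma closed_segment_inter_closed_segment_subsingleton:
  assumes "det2 (b - a) (d - c) \<noteq> 0"
  shows "finite (closed_segment a b \<inter> closed_segment c d)"
    and "card (closed_segment a b \<inter> closed_segment c d) \<le> 1"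
proof -
  have unique: "z1 = z2"
    if z1: "z1 \<in> closed_segment a b \<inter> closed_segment c d"
      and z2: "z2 \<in> closed_segment a b \<inter> closed_segment c d"
    for z1 z2
  proof -
    obtain s1 where s1: "z1 = a + s1 *\<^sub>R (b - a)"
      using z1 by (meson IntD1 in_closed_segment_affine)
    obtain s2 where s2: "z2 = a + s2 *\<^sub>R (b - a)"
      using z2 by (meson IntD1 in_closed_segment_affine)
    obtain t1 where t1: "z1 = c + t1 *\<^sub>R (d - c)"
      using z1 by (meson IntD2 in_closed_segment_affine)
    obtain t2 where t2: "z2 = c + t2 *\<^sub>R (d - c)"
      using z2 by (meson IntD2 in_closed_segment_affine)
    have "(s1 - s2) *\<^sub>R (b - a) = z1 - z2"
      unfolding s1 s2 by (simp add: algebra_simps)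
    also have "\<dots> = (t1 - t2) *\<^sub>R (d - c)"
      unfolding t1 t2 by (simp add: algebra_simps)
    finally have eq: "(s1 - s2) *\<^sub>R (b - a) = (t1 - t2) *\<^sub>R (d - c)" .
    have re: "(s1 - s2) * Re (b - a) = (t1 - t2) * Re (d - c)"
      using arg_cong[OF eq, of Re] by simp
    have im: "(s1 - s2) * Im (b - a) = (t1 - t2) * Im (d - c)"
      using arg_cong[OF eq, of Im] by simp
    have "(t1 - t2) * det2 (b - a) (d - c) =
        Re (b - a) * ((t1 - t2) * Im (d - c)) - Im (b - a) * ((t1 - t2) * Re (d - c))"
      by (simp add: det2_def algebra_simps)
    also have "\<dots> = 0" by (simp only: re[symmetric] im[symmetric]) (simp add: algebra_simps)
    finally have "t1 = t2" using assms by simp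
    then show "z1 = z2" using t1 t2 by simp
  qed
  then have "closed_segment a b \<inter> closed_segment c d = {} \<or>
      (\<exists>z. closed_segment a b \<inter> closed_segment c d = {z})"
    by blast
  then show "finite (closed_segment a b \<inter> closed_segment c d)"
    and "card (closed_segment a b \<inter> closed_segment c d) \<le> 1"
    by auto
qed

definition straight_curve :: "('a::linorder \<Rightarrow> complex) \<Rightarrow> 'a set \<Rightarrow> real \<Rightarrow> complex" where
  "straight_curve pos e = linepath (pos (Min e)) (pos (Max e))"

lemma path_image_straight_curve:
  assumes "u \<noteq> v"
  shows "path_image (straight_curve pos {u, v}) = closed_segment (pos u) (pos v)"
  using assms by (cases "u < v")
    (simp_all add: straight_curve_def insert_commute closed_segment_commute min_def max_def)

definition general_position :: "('a \<Rightarrow> complex) \<Rightarrow> 'a set \<Rightarrow> bool" where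
  "general_position pos V \<longleftrightarrow>
     (\<forall>u\<in>V. \<forall>v\<in>V. \<forall>w\<in>V. distinct [u, v, w] \<longrightarrow> orient (pos u) (pos v) (pos w) \<noteq> 0)"

lemma straight_curve_vertex_conditions:
  fixes pos :: "'a::linorder \<Rightarrow> complex"
  assumes inj: "inj_on pos V" and gp: "general_position pos V"
    and e: "e = {u, v}" "u \<in> V" "v \<in> V" "u \<noteq> v"
  shows "arc (straight_curve pos e)"
    and "{pathstart (straight_curve pos e), pathfinish (straight_curve pos e)} = pos ` e"
    and "path_image (straight_curve pos e) \<inter> pos ` V = pos ` e"
proof -
  have curve: "straight_curve pos e = linepath (pos (min u v)) (pos (max u v))"
    using e by (simp add: straight_curve_def)
  have "pos (min u v) \<noteq> pos (max u v)"
    using e by (cases "u \<le> v") (auto simp: inj_on_eq_iff[OF inj])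
  then show "arc (straight_curve pos e)" by (simp add: curve)
  show "{pathstart (straight_curve pos e), pathfinish (straight_curve pos e)} = pos ` e"
    unfolding curve by (cases "u \<le> v") (simp_all add: e(1) min_def max_def insert_commute)
  have "pos w \<notin> closed_segment (pos u) (pos v)" if "w \<in> V" "w \<noteq> u" "w \<noteq> v" for w
  proof -
    have "distinct [u, v, w]" using e(4) that by auto
    then have "orient (pos u) (pos v) (pos w) \<noteq> 0"
      using gp e(2,3) that(1) unfolding general_position_def by blast
    then show ?thesis using orient_eq_0_if_in_closed_segment by blast
  qed
  then have "closed_segment (pos u) (pos v) \<inter> pos ` V \<subseteq> pos ` e"
    using e(1) by blast
  moreover have "pos ` e \<subseteq> closed_segment (pos u) (pos v) \<inter> pos ` V"
    using e by auto
  ultimately show "path_image (straight_curve pos e) \<inter> pos ` V = pos ` e"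
    using path_image_straight_curve[OF e(4)] e(1) by auto
qed

lemma edges_share_vertex:
  assumes "u \<noteq> v" "x \<noteq> y" "{u, v} \<noteq> {x, y}" "{u, v} \<inter> {x, y} \<noteq> {}"
  obtains p q r where "{u, v} = {p, q}" "{x, y} = {p, r}" "distinct [p, q, r]"
    "p \<in> {u, v}" "q \<in> {u, v}" "r \<in> {x, y}"
proof -
  consider "u = x" | "u = y" | "v = x" | "v = y" using assms(4) by blast
  then show thesis
  proof cases
    case 1 then show ?thesis using assms by (intro that[of u v y]) auto
  next
    case 2 then show ?thesis using assms by (intro that[of u v x]) auto
  next
    case 3 then show ?thesis using assms by (intro that[of v u y]) auto
  next
    case 4 then show ?thesis using assms by (intro that[of v u x]) auto
  qed
qed

lemma straight_curve_adjacent_edges: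
  fixes pos :: "'a::linorder \<Rightarrow> complex"
  assumes gp: "general_position pos V"
    and e: "e = {u, v}" "u \<in> V" "v \<in> V" "u \<noteq> v"
    and f: "f = {x, y}" "x \<in> V" "y \<in> V" "x \<noteq> y"
    and "e \<noteq> f" "e \<inter> f \<noteq> {}"
  shows "path_image (straight_curve pos e) \<inter> path_image (straight_curve pos f) = pos ` (e \<inter> f)"
proof -
  obtain p q r where "e = {p, q}" "f = {p, r}" "distinct [p, q, r]"
    "p \<in> {u, v}" "q \<in> {u, v}" "r \<in> {x, y}"
    using edges_share_vertex[of u v x y] assms(2-) by blast
  with e f have pqr: "e = {p, q}" "f = {p, r}" "distinct [p, q, r]" "p \<in> V" "q \<in> V" "r \<in> V"
    by auto
  then have "orient (pos p) (pos q) (pos r) \<noteq> 0"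
    using gp unfolding general_position_def by blast
  then have "closed_segment (pos p) (pos q) \<inter> closed_segment (pos p) (pos r) = {pos p}"
    by (rule closed_segment_inter_closed_segment_common_end)
  moreover have "e \<inter> f = {p}" using pqr by auto
  ultimately show ?thesis
    using pqr by (simp add: path_image_straight_curve)
qed

lemma one_planar_drawing_straight_curve:
  fixes pos :: "'a::linorder \<Rightarrow> complex"
  assumes inj: "inj_on pos V" and gp: "general_position pos V"
    and edges: "\<And>e. e \<in> E \<Longrightarrow> \<exists>u\<in>V. \<exists>v\<in>V. u \<noteq> v \<and> e = {u, v}"
    and independent: "\<And>e f. e \<in> E \<Longrightarrow> f \<in> E \<Longrightarrow> e \<inter> f = {} \<Longrightarrow>
      finite (path_image (straight_curve pos e) \<inter> path_image (straight_curve pos f)) \<and>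
      card (path_image (straight_curve pos e) \<inter> path_image (straight_curve pos f)) \<le> 1"
    and crossed_once: "\<And>e. e \<in> E \<Longrightarrow> card {f \<in> E. crosses (straight_curve pos) e f} \<le> 1"
  shows "one_planar_drawing V E pos (straight_curve pos)"
  unfolding one_planar_drawing_def
proof (intro conjI ballI impI)
  fix e assume "e \<in> E"
  then obtain u v where e: "e = {u, v}" "u \<in> V" "v \<in> V" "u \<noteq> v" using edges by blast
  show "arc (straight_curve pos e)"
    and "{pathstart (straight_curve pos e), pathfinish (straight_curve pos e)} = pos ` e"
    and "path_image (straight_curve pos e) \<inter> pos ` V = pos ` e"
    using straight_curve_vertex_conditions[OF inj gp e] by blast+
next
  fix e f assume ef: "e \<in> E" "f \<in> E" "e \<noteq> f \<and> e \<inter> f \<noteq> {}"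
  obtain u v where e: "e = {u, v}" "u \<in> V" "v \<in> V" "u \<noteq> v" using edges ef(1) by blast
  obtain x y where f: "f = {x, y}" "x \<in> V" "y \<in> V" "x \<noteq> y" using edges ef(2) by blast
  show "path_image (straight_curve pos e) \<inter> path_image (straight_curve pos f) = pos ` (e \<inter> f)"
    using straight_curve_adjacent_edges[OF gp e f] ef(3) by blast
qed (use inj independent crossed_once in blast)+

lemma class_C0_straight_drawing_one_crossing:
  fixes pos :: "'a::linorder \<Rightarrow> complex"
  assumes inj: "inj_on pos V" and gp: "general_position pos V"
    and edges: "\<And>e. e \<in> E \<Longrightarrow> \<exists>u\<in>V. \<exists>v\<in>V. u \<noteq> v \<and> e = {u, v}"
    and nonparallel: "det2 (pos b - pos a) (pos d - pos c) \<noteq> 0"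
    and disjoint: "\<And>e f. e \<in> E \<Longrightarrow> f \<in> E \<Longrightarrow> e \<inter> f = {} \<Longrightarrow>
        {e, f} \<noteq> {{a, b}, {c, d}} \<Longrightarrow>
        path_image (straight_curve pos e) \<inter> path_image (straight_curve pos f) = {}"
  shows "class_C0 V E"
proof -
  let ?curve = "straight_curve pos"
  have crossing_pair: "{e, f} = {{a, b}, {c, d}}" if "e \<in> E" "f \<in> E" "crosses ?curve e f" for e f
    using disjoint that unfolding crosses_def by blast
  have independent: "e \<noteq> f" if "e \<in> E" "e \<inter> f = {}" for e f
    using edges that by blast
  have "a \<noteq> b" "c \<noteq> d" using nonparallel by (auto simp: det2_def)
  then have crossing_subsingleton:
    "finite (path_image (?curve {a, b}) \<inter> path_image (?curve {c, d}))"
    "card (path_image (?curve {a, b}) \<inter> path_image (?curve {c, d})) \<le> 1"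
    using closed_segment_inter_closed_segment_subsingleton[OF nonparallel]
    by (simp_all add: path_image_straight_curve)
  have "finite (path_image (?curve e) \<inter> path_image (?curve f)) \<and>
      card (path_image (?curve e) \<inter> path_image (?curve f)) \<le> 1"
    if ef: "e \<in> E" "f \<in> E" "e \<inter> f = {}" for e f
  proof (cases "{e, f} = {{a, b}, {c, d}}")
    case True
    with independent[OF ef(1,3)] consider "e = {a, b}" "f = {c, d}" | "e = {c, d}" "f = {a, b}"
      by (auto simp: doubleton_eq_iff)
    then show ?thesis using crossing_subsingleton by cases (simp_all add: Int_commute)
  next
    case False
    then show ?thesis using disjoint[OF ef] by simp
  qed
  moreover have "card {f \<in> E. crosses ?curve e f} \<le> 1" if "e \<in> E" for e
  proof -
    have "{f \<in> E. crosses ?curve e f} \<subseteq> {if e = {a, b} then {c, d} else {a, b}}"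
      using crossing_pair independent that unfolding crosses_def
      by (auto simp: doubleton_eq_iff)
    then show ?thesis
      using card_mono[of "{if e = {a, b} then {c, d} else {a, b}}"] by fastforce
  qed
  ultimately have "one_planar_drawing V E pos ?curve"
    using one_planar_drawing_straight_curve[OF inj gp edges] by blast
  moreover have "(e1 \<union> f1) \<inter> (e2 \<union> f2) = {}"
    if "e1 \<in> E" "f1 \<in> E" "e2 \<in> E" "f2 \<in> E"
      "crosses ?curve e1 f1 \<and> crosses ?curve e2 f2 \<and> {e1, f1} \<noteq> {e2, f2}" for e1 f1 e2 f2
    using that crossing_pair by metis
  ultimately show ?thesis unfolding class_C0_def by blast
qed

definition separated_except ::
    "('a \<Rightarrow> complex) \<Rightarrow> ('a \<times> 'a) set \<Rightarrow> 'a \<Rightarrow> 'a \<Rightarrow> 'a \<Rightarrow> 'a \<Rightarrow> bool" where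
  "separated_except pos P a b c d \<longleftrightarrow>
     (\<forall>(u, v)\<in>P. \<forall>(x, y)\<in>P. {u, v} \<inter> {x, y} = {} \<longrightarrow>
        ((u, v), (x, y)) \<in> {((a, b), (c, d)), ((c, d), (a, b))} \<or>
        same_side (pos u) (pos v) (pos x) (pos y) \<or> same_side (pos x) (pos y) (pos u) (pos v))"

lemma straight_edges_disjoint_if_separated:
  fixes pos :: "'a::linorder \<Rightarrow> complex"
  assumes proper: "\<forall>(u, v)\<in>P. u \<noteq> v"
    and separated: "separated_except pos P a b c d"
    and e: "e \<in> (\<lambda>(u, v). {u, v}) ` P" and f: "f \<in> (\<lambda>(u, v). {u, v}) ` P"
    and "e \<inter> f = {}" "{e, f} \<noteq> {{a, b}, {c, d}}"
  shows "path_image (straight_curve pos e) \<inter> path_image (straight_curve pos f) = {}"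
proof -
  obtain u v where uv: "(u, v) \<in> P" "e = {u, v}" using e by auto
  obtain x y where xy: "(x, y) \<in> P" "f = {x, y}" using f by auto
  have disj: "{u, v} \<inter> {x, y} = {}" using assms(5) uv(2) xy(2) by simp
  have not_exceptional: "((u, v), (x, y)) \<notin> {((a, b), (c, d)), ((c, d), (a, b))}"
  proof
    assume "((u, v), (x, y)) \<in> {((a, b), (c, d)), ((c, d), (a, b))}"
    then consider "e = {a, b}" "f = {c, d}" | "e = {c, d}" "f = {a, b}"
      using uv(2) xy(2) by auto
    then show False using assms(6) by cases (simp_all add: insert_commute)
  qed
  have "\<forall>(x', y')\<in>P. {u, v} \<inter> {x', y'} = {} \<longrightarrow>
      ((u, v), (x', y')) \<in> {((a, b), (c, d)), ((c, d), (a, b))} \<or>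
      same_side (pos u) (pos v) (pos x') (pos y') \<or> same_side (pos x') (pos y') (pos u) (pos v)"
    using bspec[OF separated[unfolded separated_except_def] uv(1)] by (simp only: prod.case)
  from bspec[OF this xy(1)] disj not_exceptional
  have "same_side (pos u) (pos v) (pos x) (pos y) \<or> same_side (pos x) (pos y) (pos u) (pos v)"
    by (simp only: prod.case) blast
  then have "closed_segment (pos u) (pos v) \<inter> closed_segment (pos x) (pos y) = {}"
  proof
    assume "same_side (pos x) (pos y) (pos u) (pos v)"
    then show ?thesis by (subst Int_commute) (rule closed_segment_disjoint_if_same_side)
  qed (rule closed_segment_disjoint_if_same_side)
  moreover have "u \<noteq> v" "x \<noteq> y" using proper uv(1) xy(1) by auto
  ultimately show ?thesis
    using uv(2) xy(2) by (simp add: path_image_straight_curve)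
qed

lemma class_C0_straight_drawing_of_pairs:
  fixes pos :: "'a::linorder \<Rightarrow> complex"
  assumes "inj_on pos V" "general_position pos V"
    and pairs: "\<forall>(u, v)\<in>P. u \<noteq> v \<and> u \<in> V \<and> v \<in> V"
    and "det2 (pos b - pos a) (pos d - pos c) \<noteq> 0"
    and separated: "separated_except pos P a b c d"
  shows "class_C0 V ((\<lambda>(u, v). {u, v}) ` P)"
proof (rule class_C0_straight_drawing_one_crossing[OF assms(1,2) _ assms(4)])
  show "\<exists>u\<in>V. \<exists>v\<in>V. u \<noteq> v \<and> e = {u, v}" if "e \<in> (\<lambda>(u, v). {u, v}) ` P" for e
  proof -
    from that obtain u v where "(u, v) \<in> P" "e = {u, v}" by auto
    moreover from pairs this(1) have "u \<noteq> v \<and> u \<in> V \<and> v \<in> V" by auto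
    ultimately show ?thesis by blast
  qed
  have proper: "\<forall>(u, v)\<in>P. u \<noteq> v" using pairs by auto
  show "path_image (straight_curve pos e) \<inter> path_image (straight_curve pos f) = {}"
    if "e \<in> (\<lambda>(u, v). {u, v}) ` P" "f \<in> (\<lambda>(u, v). {u, v}) ` P" "e \<inter> f = {}"
      "{e, f} \<noteq> {{a, b}, {c, d}}" for e f
    by (rule straight_edges_disjoint_if_separated[OF proper separated that])
qed

lemma join_edges_eq_UN: "join_edges V1 E1 V2 E2 = E1 \<union> E2 \<union> (\<Union>u\<in>V1. (\<lambda>v. {u, v}) ` V2)"
  unfolding join_edges_def by blast

lemma atLeastAtMost_0_5: "{0..5::nat} = {0, 1, 2, 3, 4, 5}"
  by auto

text \<open>The only crossing is between the edges {1,4} and {2,3}, at 15/2 + 15/2 i.\<close>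

definition pos_C3_P2_P1 :: "nat \<Rightarrow> complex" where
  "pos_C3_P2_P1 = (!) [Complex 1 10, Complex 9 0, Complex 7 6, Complex 9 12, Complex 7 10, Complex 6 5]"

definition pairs_C3_P2_P1 :: "(nat \<times> nat) set" where
  "pairs_C3_P2_P1 = {(0, 1), (1, 2), (0, 2), (3, 4), (2, 3), (2, 4), (2, 5), (1, 3), (1, 4), (1, 5),
    (0, 3), (0, 4), (0, 5)}"

text \<open>The only crossing is between the edges {1,4} and {2,5}, at 164/27 + 20/9 i.\<close>

definition pos_P3_P3 :: "nat \<Rightarrow> complex" where
  "pos_P3_P3 = (!) [Complex 0 0, Complex 12 0, Complex 7 5, Complex 6 9, Complex 4 3, Complex 6 2]"

definition pairs_P3_P3 :: "(nat \<times> nat) set" where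
  "pairs_P3_P3 = {(0, 1), (1, 2), (3, 4), (4, 5), (2, 3), (2, 4), (2, 5), (1, 3), (1, 4), (1, 5),
    (0, 3), (0, 4), (0, 5)}"

lemma class_C0_C3_join_P2_P1: "class_C0 {0..5} (join_edges {0,1,2} C3_edges {3,4,5} P2_P1_edges)"
proof -
  have "join_edges {0,1,2} C3_edges {3,4,5} P2_P1_edges = (\<lambda>(u, v). {u, v}) ` pairs_C3_P2_P1"
    by (simp add: join_edges_eq_UN C3_edges_def P2_P1_edges_def pairs_C3_P2_P1_def insert_commute)
  moreover have "class_C0 {0..5} ((\<lambda>(u, v). {u, v}) ` pairs_C3_P2_P1)"
    unfolding atLeastAtMost_0_5
    by (rule class_C0_straight_drawing_of_pairs[where pos = pos_C3_P2_P1 and a = 1 and b = 4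
          and c = 2 and d = 3])
      (simp_all add: pos_C3_P2_P1_def pairs_C3_P2_P1_def general_position_def
        separated_except_def same_side_def orient_def det2_def)
  ultimately show ?thesis by simp
qed

lemma class_C0_P3_join_P3: "class_C0 {0..5} (join_edges {0,1,2} P3_edges_a {3,4,5} P3_edges_b)"
proof -
  have "join_edges {0,1,2} P3_edges_a {3,4,5} P3_edges_b = (\<lambda>(u, v). {u, v}) ` pairs_P3_P3"
    by (simp add: join_edges_eq_UN P3_edges_a_def P3_edges_b_def pairs_P3_P3_def insert_commute)
  moreover have "class_C0 {0..5} ((\<lambda>(u, v). {u, v}) ` pairs_P3_P3)"
    unfolding atLeastAtMost_0_5
    by (rule class_C0_straight_drawing_of_pairs[where pos = pos_P3_P3 and a = 1 and b = 4
          and c = 2 and d = 5])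
      (simp_all add: pos_P3_P3_def pairs_P3_P3_def general_position_def
        separated_except_def same_side_def orient_def det2_def)
  ultimately show ?thesis by simp
qed

theorem lemma7:
  shows "class_C0 {0..5} (join_edges {0,1,2} C3_edges {3,4,5} P2_P1_edges)
       \<and> class_C0 {0..5} (join_edges {0,1,2} P3_edges_a {3,4,5} P3_edges_b)"
  using class_C0_C3_join_P2_P1 class_C0_P3_join_P3 by blast

end
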